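(* Let $n$ be a positive integer that is a multiple of $3$ or a multiple of $4$. Then it is impossible to place $n-1$ queens on $\mathbb{Z}_n^2$ without conflict.
   Context: Queens are placed on distinct fields of the torus board $\mathbb{Z}_n^2$. Two queens at distinct fields $(x,y),(x',y')$ are in conflict iff $x=x'$, or $y=y'$, or $x+y=x'+y'$, or $x-y=x'-y'$ in $\mathbb{Z}_n$. A placement is without conflict if no two queens are in conflict. *)

theory Defs
  imports Main
begin

(* Fields of the torus Z_n^2 are represented by pairs of integers in {0..<n} x {0..<n};
   equality in Z_n is congruence modulo n. *)
definition torus_board :: "nat \<Rightarrow> (int \<times> int) set" where
  "torus_board n = {0..<int n} \<times> {0..<int n}"

definition queens_conflict :: "nat \<Rightarrow> int \<times> int \<Rightarrow> int \<times> int \<Rightarrow> bool" where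
  "queens_conflict n p q \<longleftrightarrow> p \<noteq> q \<and>
     (fst p mod int n = fst q mod int n \<or>
      snd p mod int n = snd q mod int n \<or>
      (fst p + snd p) mod int n = (fst q + snd q) mod int n \<or>
      (fst p - snd p) mod int n = (fst q - snd q) mod int n)"

definition conflict_free :: "nat \<Rightarrow> (int \<times> int) set \<Rightarrow> bool" where
  "conflict_free n Q \<longleftrightarrow> Q \<subseteq> torus_board n \<and>
     (\<forall>p\<in>Q. \<forall>q\<in>Q. \<not> queens_conflict n p q)"

end

theory Submission
  imports Defs "HOL-Number_Theory.Cong"
begin

(* Rows, columns and the two diagonal
   classes are each met injectively, so each misses exactly one residue a, b, c, d.
   Summing over Q gives c = a + b - S1 and d = a - b + S1 (mod n), where S1 and S2 are the
   sums of i and i^2 over i < n; summing squares and using (x+y)^2 + (x-y)^2 = 2x^2 + 2y^2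
   gives 2 S2 = 2 S1 (2b - S1) modulo every M dividing both 2n and n^2.  Since
   2 S1 = n(n-1) and 6 S2 = n(n-1)(2n-1), the choice M = n for 3 dvd n, resp. M = 2n for
   4 dvd n, forces 3, resp. 6, to divide (n-1)(2n-1), which is impossible. *)

lemma atLeastLessThan_int_Suc: "{0..<1 + int n} = insert (int n) {0..<int n}"
  by auto

lemma double_sum_atLeastLessThan_int: "2 * (\<Sum>i\<in>{0..<int n}. i) = int n * (int n - 1)"
  by (induction n) (simp_all add: atLeastLessThan_int_Suc algebra_simps)

lemma sum_squares_atLeastLessThan_int:
  "6 * (\<Sum>i\<in>{0..<int n}. i^2) = int n * (int n - 1) * (2 * int n - 1)"
  by (induction n)
    (simp_all add: atLeastLessThan_int_Suc algebra_simps power2_eq_square)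

lemma cong_square_lift:
  fixes x y M N :: int
  assumes "[x = y] (mod N)" "M dvd 2 * N" "M dvd N^2"
  shows "[x^2 = y^2] (mod M)"
proof -
  obtain k where "y = x + N * k" using assms(1) by (auto simp: cong_iff_lin)
  then have "y^2 - x^2 = (2 * N) * (x * k) + N^2 * k^2"
    by (simp add: algebra_simps power2_eq_square)
  then have "M dvd y^2 - x^2"
    using assms(2,3) by simp
  then show ?thesis
    by (simp add: cong_iff_dvd_diff dvd_diff_commute)
qed

definition misses_exactly :: "('a \<Rightarrow> int) \<Rightarrow> 'a set \<Rightarrow> int \<Rightarrow> int \<Rightarrow> bool" where
  "misses_exactly f Q N a \<longleftrightarrow> a \<in> {0..<N} \<and> bij_betw f Q ({0..<N} - {a})"

lemma ex_misses_exactly: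
  assumes "inj_on f Q" "f ` Q \<subseteq> {0..<int n}" "card Q = n - 1" "n > 0"
  shows "\<exists>a. misses_exactly f Q (int n) a"
proof -
  have "finite Q" using assms(1,2) finite_imageD finite_subset by blast
  then have "card ({0..<int n} - f ` Q) = 1"
    using assms by (simp add: card_Diff_subset card_image finite_subset)
  then obtain a where a: "{0..<int n} - f ` Q = {a}" by (auto simp: card_1_singleton_iff)
  then have "a \<in> {0..<int n}" "f ` Q = {0..<int n} - {a}" using assms(2) by auto
  then show ?thesis using assms(1) by (auto simp: misses_exactly_def bij_betw_def)
qed

lemma sum_misses_exactly:
  fixes g :: "int \<Rightarrow> 'b::ab_group_add"
  assumes "misses_exactly f Q N a"
  shows "(\<Sum>p\<in>Q. g (f p)) = (\<Sum>i\<in>{0..<N}. g i) - g a"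
  using assms sum.reindex_bij_betw[of f Q "{0..<N} - {a}" g]
  by (simp add: misses_exactly_def sum_diff1)

lemma sum_misses_exactly_linear_cong:
  assumes "misses_exactly x Q N a" "misses_exactly y Q N b" "misses_exactly u Q N c"
    and "\<And>p. p \<in> Q \<Longrightarrow> [u p = x p + e * y p] (mod N)"
  shows "[c = a + e * (b - (\<Sum>i\<in>{0..<N}. i))] (mod N)"
proof -
  let ?S = "\<Sum>i\<in>{0..<N}. i"
  have "[(\<Sum>p\<in>Q. u p) = (\<Sum>p\<in>Q. x p + e * y p)] (mod N)"
    using assms(4) by (rule cong_sum)
  then have "[?S - c = (?S - a) + e * (?S - b)] (mod N)"
    using sum_misses_exactly[OF assms(1), of id] sum_misses_exactly[OF assms(2), of id]
      sum_misses_exactly[OF assms(3), of id]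
    by (simp add: sum.distrib sum_distrib_left[symmetric])
  then show ?thesis
    by (simp add: cong_iff_dvd_diff dvd_diff_commute algebra_simps)
qed

lemma sum_squares_misses_exactly_cong:
  fixes M N :: int
  assumes "M dvd 2 * N" "M dvd N^2"
    and x: "misses_exactly x Q N a" and y: "misses_exactly y Q N b"
    and u: "misses_exactly u Q N c" and v: "misses_exactly v Q N d"
    and uxy: "\<And>p. p \<in> Q \<Longrightarrow> [u p = x p + y p] (mod N)"
    and vxy: "\<And>p. p \<in> Q \<Longrightarrow> [v p = x p - y p] (mod N)"
  shows "[2 * (\<Sum>i\<in>{0..<N}. i^2)
          = 2 * (\<Sum>i\<in>{0..<N}. i) * (2 * b - (\<Sum>i\<in>{0..<N}. i))] (mod M)"
proof -
  let ?S1 = "\<Sum>i\<in>{0..<N}. i" and ?S2 = "\<Sum>i\<in>{0..<N}. i^2"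
  have "[u p^2 + v p^2 = 2 * x p^2 + 2 * y p^2] (mod M)" if "p \<in> Q" for p
  proof -
    have "[u p^2 + v p^2 = (x p + y p)^2 + (x p - y p)^2] (mod M)"
      using that assms(1,2) uxy vxy by (intro cong_add cong_square_lift)
    then show ?thesis by (simp add: algebra_simps power2_eq_square)
  qed
  then have "[(\<Sum>p\<in>Q. u p^2 + v p^2) = (\<Sum>p\<in>Q. 2 * x p^2 + 2 * y p^2)] (mod M)"
    by (rule cong_sum)
  then have squares: "[(?S2 - c^2) + (?S2 - d^2) = 2 * (?S2 - a^2) + 2 * (?S2 - b^2)] (mod M)"
    using sum_misses_exactly[OF x, of power2] sum_misses_exactly[OF y, of power2]
      sum_misses_exactly[OF u, of power2] sum_misses_exactly[OF v, of power2]
    by (simp add: sum.distrib sum_distrib_left[symmetric])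
  have "[c = a + 1 * (b - ?S1)] (mod N)"
    using x y u by (rule sum_misses_exactly_linear_cong) (simp add: uxy)
  then have c: "[c^2 = (a + (b - ?S1))^2] (mod M)"
    using assms(1,2) by (simp add: cong_square_lift)
  have "[d = a + (- 1) * (b - ?S1)] (mod N)"
    using x y v by (rule sum_misses_exactly_linear_cong) (simp add: vxy)
  then have "[d = a - (b - ?S1)] (mod N)"
    by (simp add: algebra_simps)
  then have d: "[d^2 = (a - (b - ?S1))^2] (mod M)"
    using assms(1,2) by (rule cong_square_lift)
  have "[(?S2 - c^2) + (?S2 - d^2)
      = (?S2 - (a + (b - ?S1))^2) + (?S2 - (a - (b - ?S1))^2)] (mod M)"
    using c d by (intro cong_add cong_diff cong_refl)
  with squares have "[(?S2 - (a + (b - ?S1))^2) + (?S2 - (a - (b - ?S1))^2)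
      = 2 * (?S2 - a^2) + 2 * (?S2 - b^2)] (mod M)"
    using cong_sym cong_trans by blast
  \<comment> \<open>(a + t)^2 + (a - t)^2 = 2 a^2 + 2 t^2 eliminates a; here t = b - S1\<close>
  then show ?thesis
    by (simp add: cong_iff_dvd_diff dvd_diff_commute algebra_simps power2_eq_square)
qed

lemma not_cong_sum_squares_of_3_dvd:
  fixes n :: nat and b :: int
  assumes "n > 0" "3 dvd n"
  shows "[2 * (\<Sum>i\<in>{0..<int n}. i^2)
          \<noteq> 2 * (\<Sum>i\<in>{0..<int n}. i) * (2 * b - (\<Sum>i\<in>{0..<int n}. i))] (mod int n)"
proof
  let ?S1 = "\<Sum>i\<in>{0..<int n}. i" and ?S2 = "\<Sum>i\<in>{0..<int n}. i^2"
  obtain m where m: "int n = 3 * m" using assms(2) by (auto elim: dvdE)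
  assume "[2 * ?S2 = 2 * ?S1 * (2 * b - ?S1)] (mod int n)"
  moreover have "int n dvd 2 * ?S1 * (2 * b - ?S1)"
    by (simp add: double_sum_atLeastLessThan_int)
  ultimately have "int n dvd 2 * ?S2" by (simp add: cong_dvd_iff)
  then obtain k where "2 * ?S2 = int n * k" ..
  then have "int n * (3 * k) = int n * ((int n - 1) * (2 * int n - 1))"
    using sum_squares_atLeastLessThan_int[of n] by (simp add: algebra_simps)
  then have "3 * k = (int n - 1) * (2 * int n - 1)"
    using assms(1) by simp
  then have "3 * k = 3 * (6 * m^2 - 3 * m) + 1"
    using m by (simp add: algebra_simps power2_eq_square)
  then show False by presburger
qed

lemma not_cong_sum_squares_of_4_dvd:
  fixes n :: nat and b :: int
  assumes "n > 0" "4 dvd n"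
  shows "[2 * (\<Sum>i\<in>{0..<int n}. i^2)
          \<noteq> 2 * (\<Sum>i\<in>{0..<int n}. i) * (2 * b - (\<Sum>i\<in>{0..<int n}. i))] (mod 2 * int n)"
proof
  let ?S1 = "\<Sum>i\<in>{0..<int n}. i" and ?S2 = "\<Sum>i\<in>{0..<int n}. i^2"
  obtain m where m: "int n = 4 * m" using assms(2) by (auto elim: dvdE)
  have S1: "?S1 = 2 * m * (4 * m - 1)"
    using double_sum_atLeastLessThan_int[of n] m by (simp add: algebra_simps)
  assume "[2 * ?S2 = 2 * ?S1 * (2 * b - ?S1)] (mod 2 * int n)"
  moreover have "2 * ?S1 * (2 * b - ?S1) = (2 * int n) * ((int n - 1) * (b - m * (4 * m - 1)))"
    unfolding S1 by (simp add: m algebra_simps)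
  ultimately have "2 * int n dvd 2 * ?S2" by (metis cong_dvd_iff dvd_triv_left)
  then obtain k where "2 * ?S2 = 2 * int n * k" ..
  then have "int n * (6 * k) = int n * ((int n - 1) * (2 * int n - 1))"
    using sum_squares_atLeastLessThan_int[of n] by (simp add: algebra_simps)
  then have "6 * k = (int n - 1) * (2 * int n - 1)"
    using assms(1) by simp
  then have "6 * k = 2 * (16 * m^2 - 6 * m) + 1"
    using m by (simp add: algebra_simps power2_eq_square)
  then show False by presburger
qed

lemma conflict_free_misses_exactly:
  assumes "conflict_free n Q" "card Q = n - 1" "n > 0"
    and "L \<in> {fst, snd, \<lambda>p. fst p + snd p, \<lambda>p. fst p - snd p}"
  shows "\<exists>a. misses_exactly (\<lambda>p. L p mod int n) Q (int n) a"
proof (rule ex_misses_exactly)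
  show "inj_on (\<lambda>p. L p mod int n) Q"
    using assms(1,4) unfolding conflict_free_def queens_conflict_def inj_on_def by auto
qed (use assms(2,3) in auto)

theorem mainTheorem6:
  fixes n :: nat
  assumes "n > 0" and "3 dvd n \<or> 4 dvd n"
  shows "\<not> (\<exists>Q. card Q = n - 1 \<and> conflict_free n Q)"
proof
  assume "\<exists>Q. card Q = n - 1 \<and> conflict_free n Q"
  then obtain Q where card: "card Q = n - 1" and free: "conflict_free n Q" by blast
  let ?N = "int n"
  note misses = conflict_free_misses_exactly[OF free card assms(1)]
  obtain a where x: "misses_exactly (\<lambda>p. fst p mod ?N) Q ?N a" using misses[of fst] by auto
  obtain b where y: "misses_exactly (\<lambda>p. snd p mod ?N) Q ?N b" using misses[of snd] by auto
  obtain c where u: "misses_exactly (\<lambda>p. (fst p + snd p) mod ?N) Q ?N c"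
    using misses[of "\<lambda>p. fst p + snd p"] by auto
  obtain d where v: "misses_exactly (\<lambda>p. (fst p - snd p) mod ?N) Q ?N d"
    using misses[of "\<lambda>p. fst p - snd p"] by auto
  have square_sums_cong: "[2 * (\<Sum>i\<in>{0..<?N}. i^2)
      = 2 * (\<Sum>i\<in>{0..<?N}. i) * (2 * b - (\<Sum>i\<in>{0..<?N}. i))] (mod M)"
    if "M dvd 2 * ?N" "M dvd ?N^2" for M
    using that x y u v
    by (rule sum_squares_misses_exactly_cong) (simp_all add: cong_def mod_simps)
  from assms(2) show False
  proof
    assume "3 dvd n"
    then show False
      using square_sums_cong[of ?N] not_cong_sum_squares_of_3_dvd[OF assms(1)]
      by (simp add: power2_eq_square)
  next
    assume "4 dvd n"
    then have "2 * ?N dvd ?N^2" by (auto simp: power2_eq_square elim!: dvdE)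
    then show False
      using \<open>4 dvd n\<close> square_sums_cong[of "2 * ?N"] not_cong_sum_squares_of_4_dvd[OF assms(1)]
      by simp
  qed
qed

end
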